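(* Assume the weak form of Szpiro's conjecture. Let $u\geq 1$ be a positive integer, $r\geq1$, and $A_1,\dots,A_r$ fixed positive integers. Then the equation $$\prod_{i=1}^r A_i^{n_i}n_i! = x^2-u^2$$ has only finitely many solutions $(n_1,\dots,n_r,x)$ in positive integers $n_1,\dots,n_r$ and integers $x$.
   Context: For a nonzero integer $a$, $N(a)=\prod_{p\mid a}p$ is its radical. Weak form of Szpiro's conjecture: there exists a constant $s>0$ such that for all pairwise coprime nonzero integers $A,B,C$ with $A+B=C$ one has $|ABC|<N(ABC)^{s}$. *)

theory Defs
  imports Complex_Main "HOL-Computational_Algebra.Primes"
begin

definition radical :: "int \<Rightarrow> int" where
  "radical a = (\<Prod>p\<in>prime_factors a. p)"

definition weak_szpiro :: bool where
  "weak_szpiro \<longleftrightarrow> (\<exists>s::real. s > 0 \<and>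
     (\<forall>A B C :: int. A \<noteq> 0 \<longrightarrow> B \<noteq> 0 \<longrightarrow> C \<noteq> 0 \<longrightarrow>
        coprime A B \<longrightarrow> coprime A C \<longrightarrow> coprime B C \<longrightarrow> A + B = C \<longrightarrow>
        real_of_int \<bar>A * B * C\<bar> < real_of_int (radical (A * B * C)) powr s))"

end

theory Submission
  imports Defs
begin

(* Write x^2 - u^2 = y (y + 2u) with y = |x| - u. Dividing by g = gcd(y, 2u) gives the coprime
   triple y/g + 2u/g = (y + 2u)/g, and since g <= 2u, Szpiro's inequality yields
   x^2 - u^2 < (2u)^2 (N(2u) N(x^2 - u^2))^s.  Every prime dividing P = prod A_i^n_i n_i! is at
   most a + m, where a = max A_i and m = max n_i, so N(P) is at most the product of the primes up
   to a + m, which is below 4^(a + m).  Hence m! <= P < C (4^s)^m for a constant C; this bounds m,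
   and then x as well. *)

definition primorial :: "nat \<Rightarrow> nat" where
  "primorial n = \<Prod>{p. prime p \<and> p \<le> n}"

lemma primorial_0 [simp]: "primorial 0 = 1"
proof -
  have "{p :: nat. prime p \<and> p \<le> 0} = {}"
    by auto
  then show ?thesis
    unfolding primorial_def by (simp only: prod.empty)
qed

lemma primorial_Suc:
  "primorial (Suc n) = (if prime (Suc n) then Suc n * primorial n else primorial n)"
proof -
  have "{p. prime p \<and> p \<le> Suc n} =
        (if prime (Suc n) then insert (Suc n) {p. prime p \<and> p \<le> n} else {p. prime p \<and> p \<le> n})"
    by (auto simp: le_Suc_eq)
  moreover have "finite {p. prime p \<and> p \<le> n}"
    by auto
  ultimately show ?thesis
    unfolding primorial_def by simp
qed

lemma prod_primes_dvd:
  fixes k :: "'a :: factorial_semiring_gcd"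
  assumes "finite T" and "\<And>p. p \<in> T \<Longrightarrow> prime p \<and> p dvd k"
  shows "\<Prod>T dvd k"
  using assms
proof (induction T rule: finite_induct)
  case (insert p T)
  have "coprime p (\<Prod>T)"
    using insert.hyps(2) insert.prems by (intro prod_coprime_right primes_coprime) auto
  with insert show ?case
    by (simp add: divides_mult)
qed simp

lemma binomial_odd_middle_le: "(2*m+1) choose m \<le> 4^m"
proof -
  have "(2*m+1) choose m \<le> (\<Sum>k\<le>m. 2*m+1 choose k)"
    by (rule member_le_sum) auto
  also have "\<dots> = 4^m"
    unfolding binomial_r_part_sum by (simp add: power_mult)
  finally show ?thesis .
qed

lemma prime_dvd_binomial_odd_middle:
  assumes "prime p" "m + 1 < p" "p \<le> 2*m + 1"
  shows "p dvd (2*m+1) choose m"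
proof -
  have "fact m * fact (m+1) * ((2*m+1) choose m) = (fact (2*m+1) :: nat)"
    using binomial_fact_lemma[of m "2*m+1"] by simp
  moreover have "p dvd (fact (2*m+1) :: nat)"
    using assms(1,3) prime_dvd_fact_iff by blast
  moreover have "\<not> p dvd (fact m :: nat)" "\<not> p dvd (fact (m+1) :: nat)"
    unfolding prime_dvd_fact_iff[OF assms(1)] using assms(2) by auto
  ultimately show ?thesis
    using assms(1) by (metis prime_dvd_mult_iff)
qed

lemma primorial_le_4_power: "primorial n \<le> 4^n"
proof (induction n rule: less_induct)
  case (less n)
  consider "n \<le> 2" | "n > 2" "even n" | m where "n = 2*m + 1" "m \<ge> 1"
  proof (cases "even n")
    case False
    then obtain m where "n = 2*m + 1" by (rule oddE)
    then show ?thesis using that by (cases "m = 0") auto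
  qed (use that in force)
  then show ?case
  proof cases
    case 1
    then have "n = 0 \<or> n = 1 \<or> n = 2" by auto
    then show ?thesis
      by (auto simp: numeral_2_eq_2 primorial_Suc)
  next
    case 2
    then have "\<not> prime n"
      using prime_odd_nat by auto
    then have "primorial n = primorial (n - 1)"
      using primorial_Suc[of "n - 1"] \<open>n > 2\<close> by simp
    also have "\<dots> \<le> 4^(n - 1)"
      using less.IH \<open>n > 2\<close> by simp
    also have "\<dots> \<le> 4^n"
      by simp
    finally show ?thesis .
  next
    case 3
    define T where "T = {p. prime p \<and> m + 1 < p \<and> p \<le> 2*m + 1}"
    have primes_split: "{p. prime p \<and> p \<le> n} = {p. prime p \<and> p \<le> m + 1} \<union> T"
      unfolding T_def \<open>n = 2*m + 1\<close> by auto
    have "primorial n = primorial (m + 1) * \<Prod>T"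
      unfolding primorial_def primes_split by (rule prod.union_disjoint) (auto simp: T_def)
    moreover have "primorial (m + 1) \<le> 4^(m + 1)"
      using less.IH[of "m + 1"] 3 by simp
    moreover have "\<Prod>T \<le> 4^m"
    proof -
      have "\<Prod>T dvd (2*m+1) choose m"
        by (rule prod_primes_dvd) (use prime_dvd_binomial_odd_middle in \<open>auto simp only: T_def\<close>)
      then have "\<Prod>T \<le> (2*m+1) choose m"
        by (rule dvd_imp_le) simp
      then show ?thesis
        using binomial_odd_middle_le by (rule order_trans)
    qed
    ultimately have "primorial n \<le> 4^(m + 1) * 4^m"
      by (metis mult_le_mono)
    then show ?thesis
      using 3 by (simp add: power_add mult_2 mult.assoc)
  qed
qed

lemma radical_ge_1: "1 \<le> radical a"
  unfolding radical_def by (rule prod_ge_1) (auto simp: in_prime_factors_iff prime_ge_1_int)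

lemma radical_mono:
  assumes "a dvd b" "b \<noteq> 0"
  shows "radical a \<le> radical b"
proof -
  have "prime_factors a \<subseteq> prime_factors b"
    using assms by (auto simp: in_prime_factors_iff intro: dvd_trans)
  then show ?thesis
    unfolding radical_def by (intro prod_mono2) (auto simp: in_prime_factors_iff prime_ge_1_int)
qed

lemma radical_mult_le: "radical (a * b) \<le> radical a * radical b"
proof (cases "a = 0 \<or> b = 0")
  case True
  then show ?thesis
    using radical_ge_1[of a] radical_ge_1[of b] by (auto simp: radical_def)
next
  case False
  let ?A = "prime_factors a" and ?B = "prime_factors b"
  have "radical (a * b) = \<Prod>(?A \<union> ?B)"
    unfolding radical_def using False by (simp add: prime_factors_product)
  also have "\<dots> \<le> \<Prod>(?A \<union> ?B) * \<Prod>(?A \<inter> ?B)"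
  proof -
    have "1 \<le> \<Prod>(?A \<inter> ?B)" "1 \<le> \<Prod>(?A \<union> ?B)"
      by (auto intro!: prod_ge_1 simp: in_prime_factors_iff prime_ge_1_int)
    then show ?thesis
      by (simp add: mult_le_cancel_left1)
  qed
  also have "\<dots> = radical a * radical b"
    unfolding radical_def by (rule prod.union_inter) auto
  finally show ?thesis .
qed

lemma radical_le_primorial:
  assumes "\<And>p. prime p \<Longrightarrow> p dvd P \<Longrightarrow> p \<le> L"
  shows "radical (int P) \<le> int (primorial L)"
proof -
  have factors_bounded: "prime_factors (int P) \<subseteq> int ` {p. prime p \<and> p \<le> L}"
  proof
    fix q assume "q \<in> prime_factors (int P)"
    then have "prime q" "q dvd int P"
      by (auto simp: in_prime_factors_iff)
    then have q: "q = int (nat q)" "prime (nat q)"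
      by (simp_all add: prime_ge_0_int prime_int_nat_transfer[of q, symmetric])
    with \<open>q dvd int P\<close> have "nat q dvd P"
      by (metis int_dvd_int_iff)
    with q assms show "q \<in> int ` {p. prime p \<and> p \<le> L}"
      by blast
  qed
  have "radical (int P) \<le> \<Prod>(int ` {p. prime p \<and> p \<le> L})"
    unfolding radical_def
  proof (rule prod_mono2)
    show "prime_factors (int P) \<subseteq> int ` {p. prime p \<and> p \<le> L}"
      by (fact factors_bounded)
    show "finite (int ` {p. prime p \<and> p \<le> L})"
      by simp
    show "\<And>b. b \<in> int ` {p. prime p \<and> p \<le> L} - prime_factors (int P) \<Longrightarrow> 1 \<le> b"
      using prime_ge_1_nat by force
  qed (auto dest: in_prime_factors_imp_prime simp: prime_ge_0_int)
  also have "\<dots> = int (primorial L)"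
    unfolding primorial_def by (simp add: prod.reindex)
  finally show ?thesis .
qed

definition szpiro_exponent :: "real \<Rightarrow> bool" where
  "szpiro_exponent s \<longleftrightarrow> s > 0 \<and>
     (\<forall>A B C :: int. A \<noteq> 0 \<longrightarrow> B \<noteq> 0 \<longrightarrow> C \<noteq> 0 \<longrightarrow>
        coprime A B \<longrightarrow> coprime A C \<longrightarrow> coprime B C \<longrightarrow> A + B = C \<longrightarrow>
        real_of_int \<bar>A * B * C\<bar> < real_of_int (radical (A * B * C)) powr s)"

lemma szpiro_exponent_pos: "szpiro_exponent s \<Longrightarrow> 0 < s"
  by (simp add: szpiro_exponent_def)

lemma weak_szpiro_iff_szpiro_exponent: "weak_szpiro \<longleftrightarrow> (\<exists>s. szpiro_exponent s)"
  unfolding weak_szpiro_def szpiro_exponent_def by blast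

lemma szpiro_exponent_gcd:
  fixes a b :: int
  assumes s: "szpiro_exponent s" and "0 < a" "0 < b"
  shows "real_of_int (a * b * (a + b))
           < real_of_int (gcd a b) ^ 3 * real_of_int (radical (a * b * (a + b))) powr s"
proof -
  define g where "g = gcd a b"
  have "0 < g"
    using \<open>0 < a\<close> by (simp add: g_def)
  obtain a' b' where ab: "a = a' * g" "b = b' * g" and "coprime a' b'"
    using gcd_coprime_exists[of a b] \<open>0 < g\<close> unfolding g_def by auto
  have "0 < a'" "0 < b'"
    using ab \<open>0 < a\<close> \<open>0 < b\<close> \<open>0 < g\<close> by (simp_all add: zero_less_mult_iff)
  have "coprime a' (a' + b')" "coprime b' (a' + b')"
    using \<open>coprime a' b'\<close> by (simp_all add: coprime_iff_gcd_eq_1 gcd.commute[of b'])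
  have triple: "a * b * (a + b) = g ^ 3 * (a' * b' * (a' + b'))"
    unfolding ab by (simp add: algebra_simps power3_eq_cube)
  have "real_of_int (a' * b' * (a' + b')) < real_of_int (radical (a' * b' * (a' + b'))) powr s"
    using s \<open>coprime a' b'\<close> \<open>coprime a' (a' + b')\<close> \<open>coprime b' (a' + b')\<close> \<open>0 < a'\<close> \<open>0 < b'\<close>
    unfolding szpiro_exponent_def by (smt (verit) mult_pos_pos)
  also have "\<dots> \<le> real_of_int (radical (a * b * (a + b))) powr s"
  proof -
    have "radical (a' * b' * (a' + b')) \<le> radical (a * b * (a + b))"
      using \<open>0 < g\<close> \<open>0 < a'\<close> \<open>0 < b'\<close> by (intro radical_mono) (simp_all add: triple)
    then show ?thesis
      using szpiro_exponent_pos[OF s] radical_ge_1[of "a' * b' * (a' + b')"]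
      by (intro powr_mono2) simp_all
  qed
  finally show ?thesis
    using \<open>0 < g\<close> unfolding triple g_def[symmetric] by (simp add: mult.commute)
qed

lemma szpiro_exponent_difference_of_squares:
  fixes u x :: int
  assumes s: "szpiro_exponent s" and "0 < u" and "0 < x^2 - u^2"
  shows "real_of_int (x^2 - u^2)
           < real_of_int ((2*u)^2) * real_of_int (radical (2*u) * radical (x^2 - u^2)) powr s"
proof -
  define y where "y = \<bar>x\<bar> - u"
  have "0 < y"
    using \<open>0 < u\<close> \<open>0 < x^2 - u^2\<close> abs_le_square_iff[of x u] unfolding y_def by auto
  have factor: "x^2 - u^2 = y * (y + 2*u)"
    unfolding y_def by (simp add: algebra_simps power2_eq_square abs_mult_self_eq)
  have "real_of_int (2*u) * real_of_int (x^2 - u^2) = real_of_int (y * (2*u) * (y + 2*u))"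
    unfolding factor by simp
  also have "\<dots> < real_of_int (gcd y (2*u)) ^ 3 * real_of_int (radical (y * (2*u) * (y + 2*u))) powr s"
    using szpiro_exponent_gcd[OF s \<open>0 < y\<close>, of "2*u"] \<open>0 < u\<close> by simp
  also have "\<dots> \<le> real_of_int (2*u) ^ 3 * real_of_int (radical (2*u) * radical (x^2 - u^2)) powr s"
  proof (intro mult_mono powr_mono2 power_mono)
    show "real_of_int (gcd y (2*u)) \<le> real_of_int (2*u)"
      using \<open>0 < u\<close> gcd_le2_int[of "2*u" y] by linarith
    have "radical (y * (2*u) * (y + 2*u)) = radical (2*u * (x^2 - u^2))"
      unfolding factor by (simp add: ac_simps)
    then show "real_of_int (radical (y * (2*u) * (y + 2*u)))
                 \<le> real_of_int (radical (2*u) * radical (x^2 - u^2))"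
      using radical_mult_le[of "2*u" "x^2 - u^2"] by (simp only: of_int_le_iff of_int_mult[symmetric])
  qed (use \<open>0 < u\<close> szpiro_exponent_pos[OF s] radical_ge_1 in \<open>auto intro: order.trans[OF zero_le_one]\<close>)
  finally show ?thesis
    using \<open>0 < u\<close> by (simp add: power2_eq_square power3_eq_cube mult.assoc)
qed

lemma eventually_mult_power_less_fact:
  fixes K b :: real
  shows "eventually (\<lambda>m. K * b^m < fact m) sequentially"
proof -
  have "(\<lambda>m. K * (inverse (fact m) * b^m)) \<longlonglongrightarrow> 0"
    using tendsto_mult_right_zero[OF summable_LIMSEQ_zero[OF summable_exp]] .
  then have "eventually (\<lambda>m. K * (inverse (fact m) * b^m) < 1) sequentially"
    by (rule order_tendstoD(2)) simp
  then show ?thesis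
    by eventually_elim (simp add: field_simps)
qed

lemma prime_dvd_power_fact_product:
  fixes A e :: "'i \<Rightarrow> nat"
  assumes "finite I" "prime p" "p dvd (\<Prod>i\<in>I. A i ^ e i * fact (e i))"
    and "\<And>i. i \<in> I \<Longrightarrow> 0 < A i"
  shows "\<exists>i\<in>I. p \<le> A i \<or> p \<le> e i"
proof -
  obtain i where "i \<in> I" and "p dvd A i ^ e i \<or> p dvd fact (e i)"
    using assms(1-3) by (auto simp: prime_dvd_prod_iff prime_dvd_mult_iff)
  then have "p \<le> A i \<or> p \<le> e i"
    using assms(2,4) prime_dvd_power prime_dvd_fact_iff dvd_imp_le by metis
  with \<open>i \<in> I\<close> show ?thesis ..
qed

lemma szpiro_exponent_power_fact_product:
  fixes u x :: int and A e :: "'i \<Rightarrow> nat"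
  assumes s: "szpiro_exponent s" and "0 < u" and "finite I"
    and bounds: "\<And>i. i \<in> I \<Longrightarrow> 0 < A i \<and> A i \<le> a \<and> e i \<le> m"
    and eq: "(\<Prod>i\<in>I. int (A i ^ e i * fact (e i))) = x^2 - u^2"
  shows "real (\<Prod>i\<in>I. A i ^ e i * fact (e i))
           < real_of_int ((2*u)^2) * (real_of_int (radical (2*u)) * 4^(a + m)) powr s"
proof -
  define P where "P = (\<Prod>i\<in>I. A i ^ e i * fact (e i))"
  have "0 < P"
    unfolding P_def using bounds by (intro prod_pos) simp
  have P_eq: "int P = x^2 - u^2"
    unfolding P_def eq[symmetric] by simp
  have "radical (int P) \<le> int (primorial (a + m))"
  proof (rule radical_le_primorial)
    fix p assume "prime p" "p dvd P"
    then obtain i where "i \<in> I" "p \<le> A i \<or> p \<le> e i"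
      using prime_dvd_power_fact_product[OF \<open>finite I\<close>] bounds unfolding P_def by blast
    with bounds show "p \<le> a + m"
      by fastforce
  qed
  also have "\<dots> \<le> 4^(a + m)"
    using primorial_le_4_power by (metis of_nat_le_iff of_nat_numeral of_nat_power)
  finally have rad_P: "real_of_int (radical (int P)) \<le> 4^(a + m)"
    by (metis of_int_le_iff of_int_numeral of_int_power)
  have "real P < real_of_int ((2*u)^2) * real_of_int (radical (2*u) * radical (int P)) powr s"
    using szpiro_exponent_difference_of_squares[OF s \<open>0 < u\<close>, of x] \<open>0 < P\<close>
    unfolding P_eq[symmetric] by simp
  also have "\<dots> \<le> real_of_int ((2*u)^2) * (real_of_int (radical (2*u)) * 4^(a + m)) powr s"
    using rad_P radical_ge_1[of "2*u"] radical_ge_1[of "int P"] szpiro_exponent_pos[OF s]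
    by (intro mult_left_mono powr_mono2) simp_all
  finally show ?thesis
    unfolding P_def .
qed

lemma szpiro_exponent_bounds_power_fact_exponents:
  fixes u :: int and A :: "'i \<Rightarrow> nat"
  assumes s: "szpiro_exponent s" and "0 < u" and "finite I"
    and A_pos: "\<And>i. i \<in> I \<Longrightarrow> 0 < A i"
  obtains N where
    "\<And>e x i. (\<Prod>i\<in>I. int (A i ^ e i * fact (e i))) = x^2 - u^2 \<Longrightarrow> i \<in> I \<Longrightarrow> e i < N"
proof -
  define a where "a = Max (A ` I)"
  define K where "K = real_of_int ((2*u)^2) * (real_of_int (radical (2*u)) * 4^a) powr s"
  obtain N where N: "\<And>m. N \<le> m \<Longrightarrow> K * (4 powr s)^m < fact m"
    using eventually_mult_power_less_fact[of K "4 powr s"] unfolding eventually_sequentially by blast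
  show thesis
  proof (rule that)
    fix e :: "'i \<Rightarrow> nat" and x i
    assume eq: "(\<Prod>i\<in>I. int (A i ^ e i * fact (e i))) = x^2 - u^2" and "i \<in> I"
    define m where "m = Max (e ` I)"
    have "e i \<le> m"
      unfolding m_def using \<open>finite I\<close> \<open>i \<in> I\<close> by simp
    have "m \<in> e ` I"
      unfolding m_def using \<open>finite I\<close> \<open>i \<in> I\<close> by (intro Max_in) auto
    then obtain j where "j \<in> I" "e j = m"
      by blast
    have "fact m \<le> (\<Prod>i\<in>I. A i ^ e i * fact (e i))"
    proof (rule dvd_imp_le)
      have "fact (e j) dvd A j ^ e j * fact (e j)"
        by simp
      also have "\<dots> dvd (\<Prod>i\<in>I. A i ^ e i * fact (e i))"
        using \<open>finite I\<close> \<open>j \<in> I\<close> by (rule dvd_prodI)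
      finally show "fact m dvd (\<Prod>i\<in>I. A i ^ e i * fact (e i))"
        using \<open>e j = m\<close> by simp
    qed (use A_pos in \<open>simp add: prod_pos\<close>)
    then have "fact m \<le> real (\<Prod>i\<in>I. A i ^ e i * fact (e i))"
      by (metis of_nat_fact of_nat_le_iff)
    also have "\<dots> < real_of_int ((2*u)^2) * (real_of_int (radical (2*u)) * 4^(a + m)) powr s"
      using \<open>finite I\<close> A_pos
      by (intro szpiro_exponent_power_fact_product[OF s \<open>0 < u\<close> \<open>finite I\<close> _ eq])
         (auto simp: a_def m_def)
    also have "\<dots> = K * (4 powr s)^m"
    proof -
      have "((4::real)^m) powr s = (4 powr s)^m"
      proof -
        have "((4::real)^m) powr s = (4 powr real m) powr s"
          by (simp add: powr_realpow)
        also have "\<dots> = (4 powr s)^m"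
          by (simp add: powr_powr powr_power mult.commute)
        finally show ?thesis .
      qed
      then show ?thesis
        unfolding K_def using radical_ge_1[of "2*u"] by (simp add: power_add powr_mult)
    qed
    finally have "\<not> N \<le> m"
      using N by fastforce
    with \<open>e i \<le> m\<close> show "e i < N"
      by simp
  qed
qed

lemma finite_int_square_roots: "finite {x :: int. x^2 = c}"
proof (rule finite_subset)
  show "{x :: int. x^2 = c} \<subseteq> {-c..c}"
  proof
    fix x :: int
    assume "x \<in> {x. x^2 = c}"
    moreover have "\<bar>x\<bar> \<le> x^2"
    proof (cases "x = 0")
      case False
      then have "\<bar>x\<bar> * 1 \<le> \<bar>x\<bar> * \<bar>x\<bar>"
        by (intro mult_left_mono) auto
      then show ?thesis
        by (simp add: power2_eq_square abs_mult_self_eq)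
    qed simp
    ultimately show "x \<in> {-c..c}"
      by auto
  qed
qed simp

theorem theorem3:
  fixes u r :: nat and A :: "nat \<Rightarrow> nat"
  assumes "weak_szpiro"
    and "u \<ge> 1" and "r \<ge> 1"
    and "\<And>i. i < r \<Longrightarrow> A i > 0"
  shows "finite {(n :: nat list, x :: int).
            length n = r \<and> (\<forall>i<r. n ! i > 0) \<and>
            (\<Prod>i<r. int (A i ^ (n ! i) * fact (n ! i))) = x ^ 2 - int u ^ 2}"
proof -
  obtain s where s: "szpiro_exponent s"
    using assms(1) weak_szpiro_iff_szpiro_exponent by blast
  obtain N where N:
    "\<And>e x i. (\<Prod>i<r. int (A i ^ e i * fact (e i))) = x^2 - int u^2 \<Longrightarrow> i < r \<Longrightarrow> e i < N"
    using szpiro_exponent_bounds_power_fact_exponents[OF s, of "int u" "{..<r}" A] assms(2,4) by auto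
  let ?P = "\<lambda>n. \<Prod>i<r. int (A i ^ (n ! i) * fact (n ! i))"
  have "{(n, x). length n = r \<and> (\<forall>i<r. n ! i > 0) \<and> ?P n = x^2 - int u^2}
          \<subseteq> (SIGMA n:{n. set n \<subseteq> {..<N} \<and> length n = r}. {x. x^2 = ?P n + int u^2})"
    using N[of "(!) _"] by (auto simp: in_set_conv_nth)
  moreover have "finite (SIGMA n:{n. set n \<subseteq> {..<N} \<and> length n = r}. {x. x^2 = ?P n + int u^2})"
    by (intro finite_SigmaI finite_lists_length_eq finite_int_square_roots) simp
  ultimately show ?thesis
    by (rule finite_subset)
qed

end
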